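(* For every integer $n\ge 9$, the number of partitions of $n$ into odd parts each at least $5$ equals the number of partitions of $n$ in which the part $1$ occurs at most twice (zero, one, or two times), the parts larger than $1$ are pairwise distinct, there are at least three parts that are $\ge 2$, and the three largest parts are consecutive integers. *)

theory Defs
  imports Main "HOL-Library.Multiset"
begin

definition is_partition :: "nat multiset \<Rightarrow> nat \<Rightarrow> bool" where
  "is_partition M n \<longleftrightarrow> (\<forall>x\<in>#M. 0 < x) \<and> sum_mset M = n"

definition parts_desc :: "nat multiset \<Rightarrow> nat list" where
  "parts_desc M = rev (sorted_list_of_multiset M)"

definition odd_ge5_partitions :: "nat \<Rightarrow> nat multiset set" where
  "odd_ge5_partitions n = {M. is_partition M n \<and> (\<forall>x\<in>#M. odd x \<and> 5 \<le> x)}"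

definition special_partitions :: "nat \<Rightarrow> nat multiset set" where
  "special_partitions n = {M. is_partition M n
      \<and> count M 1 \<le> 2
      \<and> (\<forall>x. 1 < x \<longrightarrow> count M x \<le> 1)
      \<and> 3 \<le> size (filter_mset (\<lambda>x. 2 \<le> x) M)
      \<and> parts_desc M ! 0 = parts_desc M ! 1 + 1
      \<and> parts_desc M ! 1 = parts_desc M ! 2 + 1}"

end

theory Submission
  imports Defs "HOL-Computational_Algebra.Primes"
begin

(* Let O'(n) count the partitions of n into odd parts other than 1. Removing a part 3 shows
   that the partitions into odd parts at least 5 are counted by O'(n) - O'(n - 3). Removing
   a part 1 and using Euler's theorem (via Glaisher's bijection d = m 2^i with m odd) gives
   O'(n) = D(n) - D(n - 1), where D counts partitions into distinct parts, and raising the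
   largest part of a distinct partition identifies D(n) - D(n - 1) with the number T2(n) of
   distinct partitions whose two largest parts are consecutive. Lowering the two largest parts
   by one and removing a part 1 give T2(n) = T2(n - 2) + T3(n) and T3(n) = T3'(n) + T3'(n - 1),
   up to the exceptional partitions {1, 2} and {1, 2, 3}; here T3 asks for three consecutive
   largest parts and T3' also forbids the part 1. Finally, a special partition of n is a
   partition counted by T3'(n - c) together with c <= 2 parts equal to 1, so both sides equal
   T3'(n) + T3'(n - 1) + T3'(n - 2) once n >= 9. *)

section \<open>Partitions with restricted parts\<close>

definition partitions_with :: "(nat \<Rightarrow> bool) \<Rightarrow> nat \<Rightarrow> nat multiset set" where
  "partitions_with P n = {M. is_partition M n \<and> (\<forall>x\<in>#M. P x)}"

lemma member_le_sum_mset: "x \<in># M \<Longrightarrow> x \<le> sum_mset (M :: nat multiset)"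
  by (auto dest!: multi_member_split)

lemma size_le_sum_mset: "(\<forall>x\<in>#M. 0 < x) \<Longrightarrow> size M \<le> sum_mset (M :: nat multiset)"
  by (induction M) auto

lemma finite_partitions_with: "finite (partitions_with P n)"
proof (rule finite_subset)
  show "partitions_with P n \<subseteq> mset ` {xs. set xs \<subseteq> {..n} \<and> length xs \<le> n}"
  proof
    fix M assume "M \<in> partitions_with P n"
    then have "set_mset M \<subseteq> {..n}" "size M \<le> n"
      using member_le_sum_mset size_le_sum_mset
      by (fastforce simp: partitions_with_def is_partition_def)+
    then show "M \<in> mset ` {xs. set xs \<subseteq> {..n} \<and> length xs \<le> n}"
      using size_mset[of "sorted_list_of_multiset M"]
      by (intro image_eqI[of _ _ "sorted_list_of_multiset M"]) simp_all
  qed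
qed (simp add: finite_lists_length_le)

lemma card_filter_split:
  assumes "finite A"
  shows "card A = card {x \<in> A. P x} + card {x \<in> A. \<not> P x}"
proof -
  have "card A = card ({x \<in> A. P x} \<union> {x \<in> A. \<not> P x})"
    by (rule arg_cong[where f = card]) blast
  also have "\<dots> = card {x \<in> A. P x} + card {x \<in> A. \<not> P x}"
    by (rule card_Un_disjoint) (use assms in auto)
  finally show ?thesis .
qed

lemma card_partitions_with_remove_part:
  assumes "P k" "0 < k" "k \<le> n"
  shows "card (partitions_with P n)
    = card (partitions_with P (n - k)) + card (partitions_with (\<lambda>x. P x \<and> x \<noteq> k) n)"
proof -
  have with_k: "{M \<in> partitions_with P n. k \<in># M} = add_mset k ` partitions_with P (n - k)"
  proof (intro equalityI subsetI)
    fix M assume M: "M \<in> {M \<in> partitions_with P n. k \<in># M}"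
    then have "M = add_mset k (M - {#k#})"
      by simp
    moreover from M have "M - {#k#} \<in> partitions_with P (n - k)"
      by (auto simp: partitions_with_def is_partition_def sum_mset_diff dest: in_diffD)
    ultimately show "M \<in> add_mset k ` partitions_with P (n - k)"
      by (rule image_eqI)
  next
    fix M assume "M \<in> add_mset k ` partitions_with P (n - k)"
    with assms show "M \<in> {M \<in> partitions_with P n. k \<in># M}"
      by (auto simp: partitions_with_def is_partition_def)
  qed
  have without_k:
    "{M \<in> partitions_with P n. k \<notin># M} = partitions_with (\<lambda>x. P x \<and> x \<noteq> k) n"
    by (auto simp: partitions_with_def)
  have "card (partitions_with P n)
      = card {M \<in> partitions_with P n. k \<in># M} + card {M \<in> partitions_with P n. k \<notin># M}"
    by (rule card_filter_split[OF finite_partitions_with])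
  also have "card {M \<in> partitions_with P n. k \<in># M} = card (partitions_with P (n - k))"
    unfolding with_k by (rule card_image) (simp add: inj_on_def)
  finally show ?thesis
    unfolding without_k .
qed

lemma odd_ge5_partitions_eq:
  "odd_ge5_partitions n = partitions_with (\<lambda>x. (odd x \<and> x \<noteq> 1) \<and> x \<noteq> 3) n"
proof -
  have "odd x \<and> 5 \<le> x \<longleftrightarrow> (odd x \<and> x \<noteq> 1) \<and> x \<noteq> 3" for x :: nat
    by presburger
  then show ?thesis
    by (simp add: odd_ge5_partitions_def partitions_with_def)
qed

section \<open>Glaisher's bijection\<close>

lemma bit_sum_pow2_iff:
  assumes "finite I"
  shows "bit (\<Sum>i\<in>I. 2 ^ i :: nat) j \<longleftrightarrow> j \<in> I"
  using assms
proof (induction I arbitrary: j rule: finite_induct)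
  case (insert i I)
  then have "bit (2 ^ i + (\<Sum>i\<in>I. 2 ^ i :: nat)) j \<longleftrightarrow> bit (2 ^ i :: nat) j \<or> j \<in> I"
    by (subst bit_disjunctive_add_iff) (auto simp: bit_exp_iff)
  with insert show ?case by (auto simp: bit_exp_iff)
qed simp

lemma bit_nat_imp_less:
  assumes "bit (c :: nat) i"
  shows "i < c"
proof (rule ccontr)
  assume "\<not> i < c"
  then have "c < 2 ^ i"
    using less_exp[of i] by linarith
  then have "c div 2 ^ i = 0"
    by simp
  with assms show False
    by (simp add: bit_iff_odd)
qed

lemma sum_pow2_bits: "(\<Sum>i | bit c i. 2 ^ i) = (c :: nat)"
proof -
  have "c = (\<Sum>i<c. of_bool (bit c i) * 2 ^ i)"
    using take_bit_sum[of c c] by (simp add: take_bit_nat_eq_self push_bit_eq_mult atLeast0LessThan)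
  also have "\<dots> = (\<Sum>i \<in> {..<c} \<inter> {i. bit c i}. 2 ^ i)"
    by (auto simp: sum.inter_restrict intro: sum.cong)
  also have "{..<c} \<inter> {i. bit c i} = {i. bit c i}"
    using bit_nat_imp_less by blast
  finally show ?thesis ..
qed

definition odd_part :: "nat \<Rightarrow> nat" where
  "odd_part d = d div 2 ^ multiplicity 2 d"

lemma pow2_multiplicity_times_odd_part: "2 ^ multiplicity 2 d * odd_part d = d"
  unfolding odd_part_def by (simp add: multiplicity_dvd)

lemma odd_odd_part: "d \<noteq> 0 \<Longrightarrow> odd (odd_part d)"
  unfolding odd_part_def by (rule multiplicity_decompose) simp_all

lemma multiplicity_2_odd_times_pow2: "odd (m :: nat) \<Longrightarrow> multiplicity 2 (m * 2 ^ i) = i"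
  by (rule multiplicity_decomposeI) simp_all

lemma odd_part_odd_times_pow2: "odd (m :: nat) \<Longrightarrow> odd_part (m * 2 ^ i) = m"
  by (simp add: odd_part_def multiplicity_2_odd_times_pow2)

definition distinct_partitions :: "nat \<Rightarrow> nat set set" where
  "distinct_partitions n = {A. finite A \<and> 0 \<notin> A \<and> \<Sum>A = n}"

lemma distinct_partitionsD:
  assumes "A \<in> distinct_partitions n"
  shows "finite A" "0 \<notin> A" "\<Sum>A = n"
  using assms by (simp_all add: distinct_partitions_def)

lemma finite_distinct_partitions: "finite (distinct_partitions n)"
proof (rule finite_subset)
  show "distinct_partitions n \<subseteq> Pow {..n}"
    by (auto simp: distinct_partitions_def intro: member_le_sum)
qed simp

definition glaisher :: "nat set \<Rightarrow> nat multiset" where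
  "glaisher A = (\<Sum>d\<in>A. replicate_mset (2 ^ multiplicity 2 d) (odd_part d))"

definition glaisher_inv :: "nat multiset \<Rightarrow> nat set" where
  "glaisher_inv M = {d. d \<noteq> 0 \<and> bit (count M (odd_part d)) (multiplicity 2 d)}"

lemma sum_mset_glaisher: "finite A \<Longrightarrow> sum_mset (glaisher A) = \<Sum>A"
  unfolding glaisher_def
  by (induction A rule: finite_induct) (simp_all add: pow2_multiplicity_times_odd_part)

lemma count_glaisher:
  assumes "finite A"
  shows "count (glaisher A) m = (\<Sum>d \<in> {d \<in> A. odd_part d = m}. 2 ^ multiplicity 2 d)"
proof -
  have "count (glaisher A) m = (\<Sum>d\<in>A. if m = odd_part d then 2 ^ multiplicity 2 d else 0)"
    by (simp add: glaisher_def count_sum)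
  then show ?thesis
    using assms by (simp add: sum.inter_filter eq_commute)
qed

lemma odd_glaisher:
  assumes "finite A" "0 \<notin> A" "m \<in># glaisher A"
  shows "odd m"
proof (rule ccontr)
  assume "\<not> odd m"
  have "odd_part d \<noteq> m" if "d \<in> A" for d
    using odd_odd_part[of d] that assms(2) \<open>\<not> odd m\<close> by auto
  then have "{d \<in> A. odd_part d = m} = {}"
    by blast
  then have "count (glaisher A) m = 0"
    unfolding count_glaisher[OF assms(1)] by (simp only: sum.empty)
  with assms(3) show False
    by (simp add: count_eq_zero_iff)
qed

lemma count_glaisher_odd:
  assumes "finite A" "odd m"
  shows "count (glaisher A) m = (\<Sum>i | m * 2 ^ i \<in> A. 2 ^ i)"
  unfolding count_glaisher[OF assms(1)]
proof (rule sum.reindex_bij_witness[where i = "\<lambda>i. m * 2 ^ i" and j = "multiplicity 2"])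
  fix d assume "d \<in> {d \<in> A. odd_part d = m}"
  moreover from this have "m * 2 ^ multiplicity 2 d = d"
    using pow2_multiplicity_times_odd_part[of d] by (simp add: mult.commute)
  ultimately show "m * 2 ^ multiplicity 2 d = d" "multiplicity 2 d \<in> {i. m * 2 ^ i \<in> A}"
    by simp_all
next
  fix i assume "i \<in> {i. m * 2 ^ i \<in> A}"
  with assms(2) show "multiplicity 2 (m * 2 ^ i) = i" "m * 2 ^ i \<in> {d \<in> A. odd_part d = m}"
    by (simp_all add: multiplicity_2_odd_times_pow2 odd_part_odd_times_pow2)
qed (rule refl)

lemma bit_count_glaisher_odd:
  assumes "finite A" "odd m"
  shows "bit (count (glaisher A) m) i \<longleftrightarrow> m * 2 ^ i \<in> A"
proof -
  have "inj (\<lambda>i. m * 2 ^ i)"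
    by (rule injI) (use assms(2) in auto)
  then have "finite {i. m * 2 ^ i \<in> A}"
    using finite_vimageI[OF assms(1)] by (simp add: vimage_def)
  then show ?thesis
    by (simp add: count_glaisher_odd assms bit_sum_pow2_iff)
qed

lemma glaisher_inv_glaisher:
  assumes "finite A" "0 \<notin> A"
  shows "glaisher_inv (glaisher A) = A"
proof -
  have "d \<in> glaisher_inv (glaisher A) \<longleftrightarrow> d \<in> A" for d
  proof (cases "d = 0")
    case False
    then show ?thesis
      using bit_count_glaisher_odd[OF assms(1) odd_odd_part[OF False]]
        pow2_multiplicity_times_odd_part[of d]
      by (simp add: glaisher_inv_def mult.commute)
  qed (use assms(2) glaisher_inv_def in auto)
  then show ?thesis
    by blast
qed

lemma mem_glaisher_inv_odd_times_pow2:
  "odd m \<Longrightarrow> m * 2 ^ i \<in> glaisher_inv M \<longleftrightarrow> bit (count M m) i"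
  by (auto simp: glaisher_inv_def odd_part_odd_times_pow2 multiplicity_2_odd_times_pow2 odd_pos)

lemma zero_notin_glaisher_inv: "0 \<notin> glaisher_inv M"
  by (simp add: glaisher_inv_def)

lemma finite_glaisher_inv: "finite (glaisher_inv M)"
proof (rule finite_subset)
  show "glaisher_inv M \<subseteq> (\<lambda>(m, i). m * 2 ^ i) ` (set_mset M \<times> {..<size M})"
  proof
    fix d assume d: "d \<in> glaisher_inv M"
    then have "multiplicity 2 d < count M (odd_part d)"
      by (simp add: glaisher_inv_def bit_nat_imp_less)
    then have "odd_part d \<in># M" "multiplicity 2 d < size M"
      using count_le_size[of M "odd_part d"] by (simp_all add: count_inI)
    then show "d \<in> (\<lambda>(m, i). m * 2 ^ i) ` (set_mset M \<times> {..<size M})"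
      using pow2_multiplicity_times_odd_part[of d] by (force simp: mult.commute)
  qed
qed simp

lemma glaisher_glaisher_inv:
  assumes "\<forall>x\<in>#M. odd x"
  shows "glaisher (glaisher_inv M) = M"
proof (rule multiset_eqI)
  fix m
  show "count (glaisher (glaisher_inv M)) m = count M m"
  proof (cases "odd m")
    case True
    then show ?thesis
      by (simp add: count_glaisher_odd finite_glaisher_inv mem_glaisher_inv_odd_times_pow2
          sum_pow2_bits)
  next
    case False
    then have "m \<notin># glaisher (glaisher_inv M)"
      using odd_glaisher finite_glaisher_inv zero_notin_glaisher_inv by blast
    with False assms show ?thesis
      by (metis count_inI)
  qed
qed

lemma bij_betw_glaisher: "bij_betw glaisher (distinct_partitions n) (partitions_with odd n)"
proof (rule bij_betw_byWitness[where f' = glaisher_inv])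
  show "\<forall>A\<in>distinct_partitions n. glaisher_inv (glaisher A) = A"
    by (simp add: distinct_partitions_def glaisher_inv_glaisher)
  show "\<forall>M\<in>partitions_with odd n. glaisher (glaisher_inv M) = M"
    by (simp add: partitions_with_def glaisher_glaisher_inv)
  show "glaisher ` distinct_partitions n \<subseteq> partitions_with odd n"
    by (auto simp: distinct_partitions_def partitions_with_def is_partition_def
        sum_mset_glaisher odd_glaisher intro: odd_pos)
  show "glaisher_inv ` partitions_with odd n \<subseteq> distinct_partitions n"
  proof
    fix A assume "A \<in> glaisher_inv ` partitions_with odd n"
    then obtain M where M: "M \<in> partitions_with odd n" "A = glaisher_inv M"
      by blast
    then have "\<Sum>A = sum_mset (glaisher A)"
      by (simp add: sum_mset_glaisher finite_glaisher_inv)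
    also have "\<dots> = n"
      using M by (simp add: glaisher_glaisher_inv partitions_with_def is_partition_def)
    finally show "A \<in> distinct_partitions n"
      using M by (simp add: distinct_partitions_def finite_glaisher_inv zero_notin_glaisher_inv)
  qed
qed

lemma card_odd_partitions_eq_distinct:
  "card (partitions_with odd n) = card (distinct_partitions n)"
  by (rule bij_betw_same_card[OF bij_betw_glaisher, symmetric])

section \<open>Distinct partitions with consecutive largest parts\<close>

definition top2_consecutive :: "nat \<Rightarrow> nat set set" where
  "top2_consecutive n = {A \<in> distinct_partitions n. A \<noteq> {} \<and> Max A - 1 \<in> A}"

definition top3_consecutive :: "nat \<Rightarrow> nat set set" where
  "top3_consecutive n = {A \<in> top2_consecutive n. Max A - 2 \<in> A}"

definition top3_consecutive_without_one :: "nat \<Rightarrow> nat set set" where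
  "top3_consecutive_without_one n = {A \<in> top3_consecutive n. 1 \<notin> A}"

lemma Max_ge_top2_consecutive:
  assumes "A \<in> top2_consecutive n"
  shows "2 \<le> Max A"
proof -
  have "Max A - 1 \<in> A" "0 \<notin> A"
    using assms by (simp_all add: top2_consecutive_def distinct_partitions_def)
  then have "Max A - 1 \<noteq> 0"
    by metis
  then show ?thesis
    by simp
qed

lemma Max_ge_top3_consecutive:
  assumes "A \<in> top3_consecutive n"
  shows "3 \<le> Max A"
proof -
  have "Max A - 2 \<in> A" "0 \<notin> A"
    using assms by (simp_all add: top3_consecutive_def top2_consecutive_def distinct_partitions_def)
  then have "Max A - 2 \<noteq> 0"
    by metis
  then show ?thesis
    by simp
qed

lemma Max_ge_top3_consecutive_without_one:
  assumes "A \<in> top3_consecutive_without_one n"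
  shows "4 \<le> Max A"
proof -
  have "Max A - 2 \<in> A" "0 \<notin> A" "1 \<notin> A"
    using assms by (simp_all add: top3_consecutive_without_one_def top3_consecutive_def
        top2_consecutive_def distinct_partitions_def)
  then have "Max A - 2 \<noteq> 0" "Max A - 2 \<noteq> 1"
    by metis+
  then show ?thesis
    by simp
qed

lemma top3_consecutive_top_interval:
  assumes "A \<in> top3_consecutive n"
  shows "{Max A - 2..Max A} \<subseteq> A"
proof -
  have "A \<noteq> {}" "finite A" "Max A - 1 \<in> A" "Max A - 2 \<in> A"
    using assms by (simp_all add: top3_consecutive_def top2_consecutive_def distinct_partitions_def)
  moreover have "{Max A - 2..Max A} = {Max A - 2, Max A - 1, Max A}"
    using Max_ge_top3_consecutive[OF assms] by auto
  ultimately show ?thesis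
    by simp
qed

lemma sum_replace:
  fixes A :: "nat set"
  assumes "finite A" "a \<in> A" "b \<notin> A"
  shows "\<Sum>(insert b (A - {a})) + a = \<Sum>A + b"
  using assms by (simp add: sum.remove)

lemma distinct_partition_initial_segment:
  assumes "A \<in> distinct_partitions n" "A \<noteq> {}" "{1..Max A} \<subseteq> A"
  shows "A = {1..Max A}"
proof -
  have "x \<in> {1..Max A}" if "x \<in> A" for x
    using that assms(1) Max_ge[of A x] by (auto simp: distinct_partitions_def Suc_le_eq intro!: gr0I)
  with assms(3) show ?thesis
    by blast
qed

lemma top2_consecutive_small:
  assumes "n < 3"
  shows "top2_consecutive n = {}"
proof (rule ccontr)
  assume "top2_consecutive n \<noteq> {}"
  then obtain A where A: "A \<in> top2_consecutive n"
    by blast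
  then have "finite A" "Max A \<in> A" "Max A - 1 \<in> A" "\<Sum>A = n"
    by (simp_all add: top2_consecutive_def distinct_partitions_def)
  moreover have "2 \<le> Max A"
    using Max_ge_top2_consecutive[OF A] .
  ultimately have "\<Sum>{Max A - 1, Max A} \<le> \<Sum>A"
    by (intro sum_mono2) simp_all
  with \<open>\<Sum>A = n\<close> have "\<Sum>{Max A - 1, Max A} \<le> n"
    by simp
  with \<open>2 \<le> Max A\<close> assms show False
    by simp
qed

lemma top3_consecutive_without_one_small:
  assumes "n < 9"
  shows "top3_consecutive_without_one n = {}"
proof (rule ccontr)
  assume "top3_consecutive_without_one n \<noteq> {}"
  then obtain A where A: "A \<in> top3_consecutive_without_one n"
    by blast
  then have A3: "A \<in> top3_consecutive n"
    by (simp add: top3_consecutive_without_one_def)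
  then have "finite A" "\<Sum>A = n"
    by (simp_all add: top3_consecutive_def top2_consecutive_def distinct_partitions_def)
  with top3_consecutive_top_interval[OF A3] have "\<Sum>{Max A - 2..Max A} \<le> n"
    using sum_mono2[of A "{Max A - 2..Max A}" "\<lambda>x. x"] by simp
  moreover have "4 \<le> Max A"
    using Max_ge_top3_consecutive_without_one[OF A] .
  moreover have "{Max A - 2..Max A} = {Max A - 2, Max A - 1, Max A}"
    "Max A - 2 \<notin> {Max A - 1, Max A}" "Max A - 1 \<noteq> Max A"
    using \<open>4 \<le> Max A\<close> by auto
  ultimately show False
    using assms by simp
qed

definition raise_max :: "nat set \<Rightarrow> nat set" where
  "raise_max B = (if B = {} then {1} else insert (Max B + 1) (B - {Max B}))"

(* Removing 0 makes lower_max {1} the empty partition. *)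
definition lower_max :: "nat set \<Rightarrow> nat set" where
  "lower_max A = insert (Max A - 1) (A - {Max A}) - {0}"

lemma Max_plus_one_notin:
  fixes B :: "nat set"
  assumes "finite B"
  shows "Max B + 1 \<notin> B"
proof
  assume "Max B + 1 \<in> B"
  then have "Max B + 1 \<le> Max B"
    by (rule Max_ge[OF assms])
  then show False
    by simp
qed

lemma Max_raise_max:
  assumes "finite B" "B \<noteq> {}"
  shows "Max (raise_max B) = Max B + 1"
  using assms by (intro Max_eqI) (auto simp: raise_max_def le_SucI)

lemma lower_max_raise_max:
  assumes "B \<in> distinct_partitions n"
  shows "lower_max (raise_max B) = B"
proof (cases "B = {}")
  case False
  have B: "finite B" "0 \<notin> B"
    using distinct_partitionsD[OF assms] by simp_all
  define m where "m = Max B"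
  have "m \<in> B" "m + 1 \<notin> B"
    using B(1) False Max_plus_one_notin[OF B(1)] by (simp_all add: m_def)
  moreover from \<open>m \<in> B\<close> B(2) have "m \<noteq> 0"
    by metis
  ultimately show ?thesis
    unfolding lower_max_def Max_raise_max[OF B(1) False] using B(2) False
    by (auto simp: raise_max_def m_def[symmetric])
qed (simp add: raise_max_def lower_max_def)

lemma raise_max_lower_max:
  assumes "A \<in> distinct_partitions n - top2_consecutive n" "A \<noteq> {}"
  shows "raise_max (lower_max A) = A"
proof -
  have A: "finite A" "0 \<notin> A"
    using assms(1) distinct_partitionsD by auto
  define m where "m = Max A"
  have m: "m \<in> A" "\<And>x. x \<in> A \<Longrightarrow> x \<le> m" "m - 1 \<notin> A"
    using A assms unfolding m_def by (auto simp: top2_consecutive_def)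
  show ?thesis
  proof (cases "m = 1")
    case True
    have "x = 1" if "x \<in> A" for x
      using m(2)[OF that] A(2) that True by (cases x) auto
    with m(1) True have "A = {1}"
      by blast
    then show ?thesis
      by (simp add: lower_max_def raise_max_def)
  next
    case False
    from m(1) A(2) have "m \<noteq> 0"
      by metis
    with False have "m - 1 \<noteq> 0"
      by simp
    then have lower: "lower_max A = insert (m - 1) (A - {m})"
      using A(2) by (auto simp: lower_max_def m_def)
    have "y \<le> m - 1" if "y \<in> lower_max A" for y
      using that m(2)[of y] by (cases "y = m - 1") (auto simp: lower)
    then have "Max (lower_max A) = m - 1"
      using A(1) by (intro Max_eqI) (simp_all add: lower)
    then show ?thesis
      using \<open>m \<noteq> 0\<close> m(1,3) by (auto simp: raise_max_def lower)
  qed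
qed

lemma raise_max_mem:
  assumes "B \<in> distinct_partitions (n - 1)" "1 \<le> n"
  shows "raise_max B \<in> distinct_partitions n - top2_consecutive n"
proof (cases "B = {}")
  case True
  with assms have "n = 1"
    by (simp add: distinct_partitions_def)
  with True show ?thesis
    by (simp add: raise_max_def distinct_partitions_def top2_consecutive_def)
next
  case False
  have B: "finite B" "0 \<notin> B" "\<Sum>B = n - 1"
    using distinct_partitionsD[OF assms(1)] by simp_all
  define m where "m = Max B"
  have "m \<in> B" "m + 1 \<notin> B"
    using B(1) False Max_plus_one_notin[OF B(1)] by (simp_all add: m_def)
  have raise: "raise_max B = insert (m + 1) (B - {m})"
    using False by (simp add: raise_max_def m_def)
  have "\<Sum>(raise_max B) + m = \<Sum>B + (m + 1)"
    unfolding raise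
    by (rule sum_replace) (use B(1) \<open>m \<in> B\<close> \<open>m + 1 \<notin> B\<close> in simp_all)
  with B(3) assms(2) have "\<Sum>(raise_max B) = n"
    by simp
  moreover have "Max (raise_max B) - 1 \<notin> raise_max B"
    using Max_raise_max[OF B(1) False] by (simp add: raise m_def)
  ultimately show ?thesis
    using B(1,2) by (simp add: distinct_partitions_def top2_consecutive_def raise)
qed

lemma lower_max_mem:
  assumes "A \<in> distinct_partitions n - top2_consecutive n" "1 \<le> n"
  shows "lower_max A \<in> distinct_partitions (n - 1)"
proof -
  have A: "finite A" "0 \<notin> A" "\<Sum>A = n"
    using assms(1) distinct_partitionsD by auto
  with assms(2) have "A \<noteq> {}"
    by auto
  define m where "m = Max A"
  have "m \<in> A"
    using A(1) \<open>A \<noteq> {}\<close> by (simp add: m_def)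
  with A(2) have "m \<noteq> 0"
    by metis
  have "m - 1 \<notin> A"
    using assms(1) \<open>A \<noteq> {}\<close> by (simp add: m_def top2_consecutive_def)
  have "\<Sum>(insert (m - 1) (A - {m})) + m = \<Sum>A + (m - 1)"
    by (rule sum_replace) (use A(1) \<open>m \<in> A\<close> \<open>m - 1 \<notin> A\<close> in simp_all)
  with A(3) \<open>m \<noteq> 0\<close> have "\<Sum>(insert (m - 1) (A - {m})) = n - 1"
    by simp
  then have "\<Sum>(lower_max A) = n - 1"
    by (simp add: lower_max_def m_def sum_diff1_nat)
  with A(1) show ?thesis
    by (simp add: distinct_partitions_def lower_max_def)
qed

lemma card_distinct_partitions_step:
  assumes "1 \<le> n"
  shows "card (distinct_partitions n) = card (distinct_partitions (n - 1)) + card (top2_consecutive n)"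
proof -
  have "bij_betw raise_max (distinct_partitions (n - 1)) (distinct_partitions n - top2_consecutive n)"
  proof (rule bij_betw_byWitness[where f' = lower_max])
    show "\<forall>A \<in> distinct_partitions n - top2_consecutive n. raise_max (lower_max A) = A"
      using assms raise_max_lower_max by (force simp: distinct_partitions_def)
  qed (use assms lower_max_raise_max raise_max_mem lower_max_mem in auto)
  then have "card (distinct_partitions (n - 1)) = card (distinct_partitions n - top2_consecutive n)"
    by (rule bij_betw_same_card)
  moreover have "top2_consecutive n \<subseteq> distinct_partitions n"
    by (auto simp: top2_consecutive_def)
  ultimately show ?thesis
    using finite_distinct_partitions card_Diff_subset[of "top2_consecutive n" "distinct_partitions n"]
      card_mono[of "distinct_partitions n" "top2_consecutive n"] finite_subset
    by fastforce
qed

definition lower_top_two :: "nat set \<Rightarrow> nat set" where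
  "lower_top_two A = insert (Max A - 2) (A - {Max A})"

definition raise_top_two :: "nat set \<Rightarrow> nat set" where
  "raise_top_two B = insert (Max B + 1) (B - {Max B - 1})"

lemma lower_top_two_mem:
  assumes "A \<in> top2_consecutive n" "Max A - 2 \<notin> A" "3 \<le> Max A"
  shows "lower_top_two A \<in> top2_consecutive (n - 2)" "raise_top_two (lower_top_two A) = A"
proof -
  have A: "finite A" "0 \<notin> A" "\<Sum>A = n" "A \<noteq> {}"
    using assms(1) by (simp_all add: top2_consecutive_def distinct_partitions_def)
  define m where "m = Max A"
  have m: "m \<in> A" "m - 1 \<in> A" "m - 2 \<notin> A" "3 \<le> m"
    using A assms by (simp_all add: m_def top2_consecutive_def)
  have lower: "lower_top_two A = insert (m - 2) (A - {m})"
    by (simp add: lower_top_two_def m_def)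
  have "y \<le> m - 1" if "y \<in> lower_top_two A" for y
    using that Max_ge[OF A(1), of y] by (cases "y = m - 2") (auto simp: lower m_def)
  moreover have "m - 1 \<noteq> m"
    using m(4) by simp
  ultimately have max_lower: "Max (lower_top_two A) = m - 1"
    using A(1) m(2) by (intro Max_eqI) (simp_all add: lower)
  have "\<Sum>(lower_top_two A) + m = \<Sum>A + (m - 2)"
    unfolding lower by (rule sum_replace) (use A(1) m in simp_all)
  with A(3) m(4) have "\<Sum>(lower_top_two A) = n - 2"
    by simp
  then show "lower_top_two A \<in> top2_consecutive (n - 2)"
    using A(1,2) m(4) max_lower
    by (simp add: top2_consecutive_def distinct_partitions_def lower numeral_2_eq_2)
  show "raise_top_two (lower_top_two A) = A"
    using m max_lower by (auto simp: raise_top_two_def lower numeral_2_eq_2)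
qed

lemma raise_top_two_mem:
  assumes "B \<in> top2_consecutive (n - 2)" "2 \<le> n"
  shows "raise_top_two B \<in> top2_consecutive n" "Max (raise_top_two B) - 2 \<notin> raise_top_two B"
    "3 \<le> Max (raise_top_two B)" "lower_top_two (raise_top_two B) = B"
proof -
  have B: "finite B" "0 \<notin> B" "\<Sum>B = n - 2" "B \<noteq> {}"
    using assms(1) by (simp_all add: top2_consecutive_def distinct_partitions_def)
  define k where "k = Max B"
  have k: "k \<in> B" "k - 1 \<in> B" "k + 1 \<notin> B" "2 \<le> k"
    using B assms(1) Max_plus_one_notin[OF B(1)] Max_ge_top2_consecutive[OF assms(1)]
    by (simp_all add: k_def top2_consecutive_def)
  have raise: "raise_top_two B = insert (k + 1) (B - {k - 1})"
    by (simp add: raise_top_two_def k_def)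
  have "y \<le> k + 1" if "y \<in> raise_top_two B" for y
    using that Max_ge[OF B(1), of y] by (auto simp: raise k_def)
  then have max_raise: "Max (raise_top_two B) = k + 1"
    using B(1) by (intro Max_eqI) (simp_all add: raise)
  have "\<Sum>(raise_top_two B) + (k - 1) = \<Sum>B + (k + 1)"
    unfolding raise by (rule sum_replace) (use B(1) k in simp_all)
  with B(3) assms(2) k(4) have "\<Sum>(raise_top_two B) = n"
    by simp
  then show "raise_top_two B \<in> top2_consecutive n"
    using B(1,2) k max_raise by (simp add: top2_consecutive_def distinct_partitions_def raise)
  show "Max (raise_top_two B) - 2 \<notin> raise_top_two B" "3 \<le> Max (raise_top_two B)"
    using k max_raise by (simp_all add: raise)
  show "lower_top_two (raise_top_two B) = B"
    using k max_raise by (auto simp: lower_top_two_def raise)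
qed

lemma card_top2_consecutive_Max_less_3:
  "card {A \<in> top2_consecutive n. Max A < 3} = of_bool (n = 3)"
proof -
  have "{A \<in> top2_consecutive n. Max A < 3} = {A. A = {1, 2} \<and> n = 3}"
  proof (intro equalityI subsetI)
    fix A assume "A \<in> {A \<in> top2_consecutive n. Max A < 3}"
    then have A: "A \<in> top2_consecutive n" "Max A < 3"
      by simp_all
    then have "Max A = 2"
      using Max_ge_top2_consecutive[OF A(1)] by simp
    have "A \<in> distinct_partitions n" "A \<noteq> {}"
      using A(1) by (simp_all add: top2_consecutive_def)
    moreover have "{1..Max A} \<subseteq> A"
      using A \<open>Max A = 2\<close> Max_in[OF distinct_partitionsD(1) \<open>A \<noteq> {}\<close>]
      by (auto simp: top2_consecutive_def numeral_2_eq_2 le_Suc_eq)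
    ultimately have "A = {1..Max A}"
      by (rule distinct_partition_initial_segment)
    with \<open>Max A = 2\<close> have "A = {1, 2}"
      by auto
    moreover have "\<Sum>A = n"
      using A by (simp add: top2_consecutive_def distinct_partitions_def)
    ultimately show "A \<in> {A. A = {1, 2} \<and> n = 3}"
      by simp
  next
    fix A :: "nat set" assume "A \<in> {A. A = {1, 2} \<and> n = 3}"
    moreover have "Max {1, 2 :: nat} = 2"
      by (simp add: max_def)
    ultimately show "A \<in> {A \<in> top2_consecutive n. Max A < 3}"
      by (simp add: top2_consecutive_def distinct_partitions_def)
  qed
  then show ?thesis
    by simp
qed

lemma card_top2_consecutive_lowerable:
  assumes "2 \<le> n"
  shows "card {A \<in> top2_consecutive n. 3 \<le> Max A \<and> Max A - 2 \<notin> A}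
    = card (top2_consecutive (n - 2))"
proof (rule bij_betw_same_card[of lower_top_two])
  show "bij_betw lower_top_two {A \<in> top2_consecutive n. 3 \<le> Max A \<and> Max A - 2 \<notin> A}
      (top2_consecutive (n - 2))"
    by (rule bij_betw_byWitness[where f' = raise_top_two])
      (use lower_top_two_mem raise_top_two_mem[OF _ assms] in auto)
qed

lemma card_top2_consecutive_step:
  assumes "2 \<le> n"
  shows "card (top2_consecutive n)
    = card (top2_consecutive (n - 2)) + card (top3_consecutive n) + of_bool (n = 3)"
proof -
  have fin: "finite (top2_consecutive n)"
    using finite_distinct_partitions by (simp add: top2_consecutive_def)
  have "{A \<in> top2_consecutive n. 3 \<le> Max A \<and> Max A - 2 \<in> A} = top3_consecutive n"
    using Max_ge_top3_consecutive by (auto simp: top3_consecutive_def)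
  then have "card {A \<in> top2_consecutive n. 3 \<le> Max A}
      = card (top3_consecutive n) + card (top2_consecutive (n - 2))"
    using card_filter_split[of "{A \<in> top2_consecutive n. 3 \<le> Max A}" "\<lambda>A. Max A - 2 \<in> A"] fin
      card_top2_consecutive_lowerable[OF assms]
    by simp
  then show ?thesis
    using card_filter_split[OF fin, of "\<lambda>A. 3 \<le> Max A"] card_top2_consecutive_Max_less_3[of n]
    by (simp add: not_le)
qed

lemma card_top3_consecutive_Max_less_4:
  "card {A \<in> top3_consecutive n. Max A < 4} = of_bool (n = 6)"
proof -
  have "{A \<in> top3_consecutive n. Max A < 4} = {A. A = {1, 2, 3} \<and> n = 6}"
  proof (intro equalityI subsetI)
    fix A assume "A \<in> {A \<in> top3_consecutive n. Max A < 4}"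
    then have A: "A \<in> top3_consecutive n" "Max A < 4"
      by simp_all
    then have "Max A = 3"
      using Max_ge_top3_consecutive[OF A(1)] by simp
    have "A \<in> distinct_partitions n" "A \<noteq> {}"
      using A(1) by (simp_all add: top3_consecutive_def top2_consecutive_def)
    moreover have "{1..Max A} \<subseteq> A"
      using A \<open>Max A = 3\<close> Max_in[OF distinct_partitionsD(1) \<open>A \<noteq> {}\<close>]
      by (auto simp: top3_consecutive_def top2_consecutive_def numeral_3_eq_3 le_Suc_eq)
    ultimately have "A = {1..Max A}"
      by (rule distinct_partition_initial_segment)
    with \<open>Max A = 3\<close> have "A = {1, 2, 3}"
      by auto
    moreover have "\<Sum>A = n"
      using A by (simp add: top3_consecutive_def top2_consecutive_def distinct_partitions_def)
    ultimately show "A \<in> {A. A = {1, 2, 3} \<and> n = 6}"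
      by simp
  next
    fix A :: "nat set" assume "A \<in> {A. A = {1, 2, 3} \<and> n = 6}"
    moreover have "Max {1, 2, 3 :: nat} = 3"
      by (simp add: max_def)
    ultimately show "A \<in> {A \<in> top3_consecutive n. Max A < 4}"
      by (simp add: top3_consecutive_def top2_consecutive_def distinct_partitions_def)
  qed
  then show ?thesis
    by simp
qed

lemma remove_one_mem:
  assumes "A \<in> top3_consecutive n" "1 \<in> A" "4 \<le> Max A"
  shows "A - {1} \<in> top3_consecutive_without_one (n - 1)"
proof -
  have A: "finite A" "0 \<notin> A" "\<Sum>A = n" "A \<noteq> {}"
    using assms(1)
    by (simp_all add: top3_consecutive_def top2_consecutive_def distinct_partitions_def)
  have "Max (A - {1}) = Max A"
    using A(1,4) assms(3) by (intro Max_eqI) auto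
  moreover have "\<Sum>(A - {1}) = n - 1"
    using A(1,3) assms(2) by (simp add: sum_diff1_nat)
  ultimately show ?thesis
    using A assms
    by (auto simp: top3_consecutive_without_one_def top3_consecutive_def top2_consecutive_def
        distinct_partitions_def)
qed

lemma insert_one_mem:
  assumes "B \<in> top3_consecutive_without_one (n - 1)" "1 \<le> n"
  shows "insert 1 B \<in> top3_consecutive n" "4 \<le> Max (insert 1 B)"
proof -
  have B: "finite B" "0 \<notin> B" "1 \<notin> B" "\<Sum>B = n - 1" "B \<noteq> {}"
    using assms(1) by (simp_all add: top3_consecutive_without_one_def top3_consecutive_def
        top2_consecutive_def distinct_partitions_def)
  have "4 \<le> Max B"
    by (rule Max_ge_top3_consecutive_without_one[OF assms(1)])
  then have max: "Max (insert 1 B) = Max B"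
    using B(1,5) by simp
  with \<open>4 \<le> Max B\<close> show "4 \<le> Max (insert 1 B)"
    by simp
  have "\<Sum>(insert 1 B) = n"
    using B(1,3,4) assms(2) by simp
  with B(1,2) max assms(1) show "insert 1 B \<in> top3_consecutive n"
    by (auto simp: top3_consecutive_without_one_def top3_consecutive_def top2_consecutive_def
        distinct_partitions_def)
qed

lemma card_top3_consecutive_with_one:
  assumes "1 \<le> n"
  shows "card {A \<in> top3_consecutive n. 4 \<le> Max A \<and> 1 \<in> A}
    = card (top3_consecutive_without_one (n - 1))"
proof (rule bij_betw_same_card[of "\<lambda>A. A - {1}"])
  show "bij_betw (\<lambda>A. A - {1}) {A \<in> top3_consecutive n. 4 \<le> Max A \<and> 1 \<in> A}
      (top3_consecutive_without_one (n - 1))"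
    by (rule bij_betw_byWitness[where f' = "insert 1"])
      (use remove_one_mem insert_one_mem[OF _ assms] in
        \<open>auto simp: top3_consecutive_without_one_def\<close>)
qed

lemma card_top3_consecutive_step:
  assumes "1 \<le> n"
  shows "card (top3_consecutive n) = card (top3_consecutive_without_one n)
    + card (top3_consecutive_without_one (n - 1)) + of_bool (n = 6)"
proof -
  have fin: "finite (top3_consecutive n)"
    using finite_distinct_partitions by (simp add: top3_consecutive_def top2_consecutive_def)
  have "{A \<in> top3_consecutive n. 4 \<le> Max A \<and> 1 \<notin> A} = top3_consecutive_without_one n"
    using Max_ge_top3_consecutive_without_one by (auto simp: top3_consecutive_without_one_def)
  then have "card {A \<in> top3_consecutive n. 4 \<le> Max A}
      = card (top3_consecutive_without_one n) + card (top3_consecutive_without_one (n - 1))"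
    using card_filter_split[of "{A \<in> top3_consecutive n. 4 \<le> Max A}" "\<lambda>A. 1 \<notin> A"] fin
      card_top3_consecutive_with_one[OF assms]
    by simp
  then show ?thesis
    using card_filter_split[OF fin, of "\<lambda>A. 4 \<le> Max A"] card_top3_consecutive_Max_less_4[of n]
    by (simp add: not_le)
qed

section \<open>Special partitions\<close>

lemma parts_desc_add_mset:
  "\<forall>y\<in>#M. y \<le> x \<Longrightarrow> parts_desc (add_mset x M) = x # parts_desc M"
  unfolding parts_desc_def by (simp add: sorted_insort_is_snoc)

lemma parts_desc_Max:
  assumes "M \<noteq> {#}"
  shows "parts_desc M = Max_mset M # parts_desc (M - {#Max_mset M#})"
proof -
  have "Max_mset M \<in># M"
    using assms by simp
  then have "M = add_mset (Max_mset M) (M - {#Max_mset M#})"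
    by simp
  also have "parts_desc \<dots> = Max_mset M # parts_desc (M - {#Max_mset M#})"
    by (rule parts_desc_add_mset) (auto dest: in_diffD)
  finally show ?thesis .
qed

lemma parts_desc_nth_mem:
  assumes "i < size M"
  shows "parts_desc M ! i \<in># M"
proof -
  have "length (parts_desc M) = size M"
    using size_mset[of "sorted_list_of_multiset M"] by (simp add: parts_desc_def)
  with assms show ?thesis
    using nth_mem[of i "parts_desc M"] by (simp add: parts_desc_def)
qed

lemma parts_desc_first_is_Max:
  assumes "M \<noteq> {#}" "y \<in># M"
  shows "y \<le> parts_desc M ! 0"
  using assms by (simp add: parts_desc_Max[OF assms(1)])

lemma parts_desc_consecutive_top3:
  assumes "3 \<le> size M"
    and "parts_desc M ! 0 = parts_desc M ! 1 + 1" "parts_desc M ! 1 = parts_desc M ! 2 + 1"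
  obtains z where "z \<in># M" "z + 1 \<in># M" "z + 2 \<in># M" "\<forall>x\<in>#M. x \<le> z + 2"
proof -
  have "parts_desc M ! 0 \<in># M" "parts_desc M ! 1 \<in># M" "parts_desc M ! 2 \<in># M"
    using parts_desc_nth_mem assms(1) by simp_all
  moreover have "M \<noteq> {#}"
    using assms(1) by auto
  then have "\<forall>x\<in>#M. x \<le> parts_desc M ! 0"
    using parts_desc_first_is_Max by blast
  ultimately show ?thesis
    using that[of "parts_desc M ! 2"] assms(2,3) by simp
qed

definition join_ones :: "nat \<times> nat set \<Rightarrow> nat multiset" where
  "join_ones = (\<lambda>(c, A). mset_set A + replicate_mset c 1)"

definition split_ones :: "nat multiset \<Rightarrow> nat \<times> nat set" where
  "split_ones M = (count M 1, set_mset M - {1})"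

lemma join_ones_split_ones:
  assumes "\<forall>x\<in>#M. 0 < x" "\<forall>x. 1 < x \<longrightarrow> count M x \<le> 1"
  shows "join_ones (split_ones M) = M"
proof (rule multiset_eqI)
  fix x
  show "count (join_ones (split_ones M)) x = count M x"
  proof (cases "x = 1 \<or> x \<notin># M")
    case False
    then have "x \<in># M" "x \<noteq> 1"
      by simp_all
    with assms(1) have "1 < x"
      by fastforce
    with assms(2) have "count M x \<le> 1"
      by blast
    moreover have "count M x \<noteq> 0"
      using \<open>x \<in># M\<close> by (simp add: count_eq_zero_iff)
    ultimately have "count M x = 1"
      by linarith
    with False show ?thesis
      by (simp add: join_ones_def split_ones_def)
  qed (auto simp: join_ones_def split_ones_def count_eq_zero_iff)
qed

lemma split_ones_join_ones:
  assumes "finite A" "1 \<notin> A"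
  shows "split_ones (join_ones (c, A)) = (c, A)"
  using assms by (auto simp: split_ones_def join_ones_def)

lemma sum_mset_join_ones: "sum_mset (join_ones (c, A)) = \<Sum>A + c"
  using sum_unfold_sum_mset[of "\<lambda>x. x" A] by (simp add: join_ones_def)

lemma filter_join_ones:
  assumes "finite A" "0 \<notin> A" "1 \<notin> A"
  shows "filter_mset (\<lambda>x. 2 \<le> x) (join_ones (c, A)) = mset_set A"
proof -
  have "{x \<in> A. 2 \<le> x} = A"
    using assms(2,3) by (auto simp: numeral_2_eq_2 Suc_le_eq intro!: Suc_lessI gr0I)
  with assms(1) show ?thesis
    by (simp add: join_ones_def)
qed

lemma parts_desc_join_ones:
  assumes "A \<in> top3_consecutive_without_one k"
  shows "take 3 (parts_desc (join_ones (c, A))) = [Max A, Max A - 1, Max A - 2]"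
proof -
  define m where "m = Max A"
  have A3: "A \<in> top3_consecutive k"
    using assms by (simp add: top3_consecutive_without_one_def)
  then have "finite A" "A \<noteq> {}"
    by (simp_all add: top3_consecutive_def top2_consecutive_def distinct_partitions_def)
  have "{m - 2..m} \<subseteq> A" "4 \<le> m"
    using top3_consecutive_top_interval[OF A3] Max_ge_top3_consecutive_without_one[OF assms]
    by (simp_all add: m_def)
  have below_m: "x \<le> m" if "x \<in> A" for x
    using Max_ge[OF \<open>finite A\<close> that] by (simp add: m_def)
  define D where "D = A - {m - 2..m}"
  define R where "R = join_ones (c, D)"
  have "A = insert m (insert (m - 1) (insert (m - 2) D))"
    using \<open>{m - 2..m} \<subseteq> A\<close> \<open>4 \<le> m\<close> by (auto simp: D_def)
  moreover have "finite D" "m \<notin> D" "m - 1 \<notin> D" "m - 2 \<notin> D" "m \<noteq> m - 1" "m \<noteq> m - 2"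
    "m - 1 \<noteq> m - 2"
    using \<open>finite A\<close> \<open>4 \<le> m\<close> by (auto simp: D_def)
  ultimately have "join_ones (c, A) = add_mset m (add_mset (m - 1) (add_mset (m - 2) R))"
    by (simp add: join_ones_def R_def)
  moreover have small: "y \<le> m - 3" if "y \<in># R" for y
  proof -
    from that \<open>finite D\<close> have "y = 1 \<or> (y \<in> A \<and> y \<notin> {m - 2..m})"
      by (auto simp: R_def D_def join_ones_def split: if_splits)
    then show ?thesis
      using \<open>4 \<le> m\<close> below_m[of y] by auto
  qed
  have "parts_desc (add_mset (m - 2) R) = (m - 2) # parts_desc R"
    by (rule parts_desc_add_mset) (auto dest: small)
  moreover have "parts_desc (add_mset (m - 1) (add_mset (m - 2) R))
      = (m - 1) # parts_desc (add_mset (m - 2) R)"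
    by (rule parts_desc_add_mset) (auto dest: small)
  moreover have "parts_desc (add_mset m (add_mset (m - 1) (add_mset (m - 2) R)))
      = m # parts_desc (add_mset (m - 1) (add_mset (m - 2) R))"
    by (rule parts_desc_add_mset) (auto dest: small)
  ultimately show ?thesis
    by (simp add: m_def)
qed

lemma split_ones_mem:
  assumes "M \<in> special_partitions n"
  shows "split_ones M \<in> Sigma {..2} (\<lambda>c. top3_consecutive_without_one (n - c))"
proof -
  have pos: "\<forall>x\<in>#M. 0 < x" and "sum_mset M = n" and "count M 1 \<le> 2"
    and distinct: "\<forall>x. 1 < x \<longrightarrow> count M x \<le> 1"
    and three: "3 \<le> size (filter_mset (\<lambda>x. 2 \<le> x) M)"
    and top: "parts_desc M ! 0 = parts_desc M ! 1 + 1" "parts_desc M ! 1 = parts_desc M ! 2 + 1"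
    using assms by (simp_all add: special_partitions_def is_partition_def)
  define c where "c = count M 1"
  define A where "A = set_mset M - {1}"
  have split: "split_ones M = (c, A)"
    by (simp add: split_ones_def c_def A_def)
  have A: "finite A" "0 \<notin> A" "1 \<notin> A"
    using pos by (auto simp: A_def)
  have M: "join_ones (c, A) = M"
    using join_ones_split_ones[OF pos distinct] by (simp add: split)
  have "\<Sum>A = n - c"
    using sum_mset_join_ones[of c A] \<open>sum_mset M = n\<close> by (simp add: M)
  have "3 \<le> card A"
    using three filter_join_ones[OF A, of c] by (simp add: M)
  have "3 \<le> size M"
    using three size_filter_mset_lesseq[of _ M] le_trans by blast
  then obtain z where "z \<in># M" "z + 1 \<in># M" "z + 2 \<in># M"
    and below_M: "\<forall>x\<in>#M. x \<le> z + 2"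
    using top by (rule parts_desc_consecutive_top3)
  have below: "x \<le> z + 2" if "x \<in> A" for x
    using that below_M by (simp add: A_def)
  have "z \<noteq> 1"
  proof
    assume "z = 1"
    have "A \<subseteq> {2, 3}"
    proof
      fix x assume "x \<in> A"
      then have "x \<le> 3"
        using below[of x] \<open>z = 1\<close> by simp
      moreover have "x \<notin> {0, 1}"
        using \<open>x \<in> A\<close> A(2,3) by blast
      ultimately show "x \<in> {2, 3}"
        by auto
    qed
    then have "card A \<le> 2"
      using card_mono[of "{2, 3 :: nat}" A] by simp
    with \<open>3 \<le> card A\<close> show False
      by simp
  qed
  with pos \<open>z \<in># M\<close> have "2 \<le> z"
    by fastforce
  then have "z \<in> A" "z + 1 \<in> A" "z + 2 \<in> A"
    using \<open>z \<in># M\<close> \<open>z + 1 \<in># M\<close> \<open>z + 2 \<in># M\<close> by (simp_all add: A_def)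
  then have "Max A = z + 2"
    using A(1) below by (intro Max_eqI) simp_all
  then have "A \<in> top3_consecutive_without_one (n - c)"
    using A \<open>\<Sum>A = n - c\<close> \<open>z \<in> A\<close> \<open>z + 1 \<in> A\<close>
    by (auto simp: top3_consecutive_without_one_def top3_consecutive_def top2_consecutive_def
        distinct_partitions_def)
  moreover have "c \<in> {..2}"
    using \<open>count M 1 \<le> 2\<close> by (simp add: c_def)
  ultimately show ?thesis
    by (simp add: split)
qed

lemma join_ones_mem:
  assumes "p \<in> Sigma {..2} (\<lambda>c. top3_consecutive_without_one (n - c))" "2 \<le> n"
  shows "join_ones p \<in> special_partitions n"
proof -
  obtain c A where p: "p = (c, A)" "c \<le> 2" and A3: "A \<in> top3_consecutive_without_one (n - c)"
    using assms(1) by auto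
  have A: "finite A" "0 \<notin> A" "1 \<notin> A" "\<Sum>A = n - c"
    using A3 by (simp_all add: top3_consecutive_without_one_def top3_consecutive_def
        top2_consecutive_def distinct_partitions_def)
  define M where "M = join_ones (c, A)"
  have "\<forall>x\<in>#M. 0 < x"
    using A(1,2) by (auto simp: M_def join_ones_def intro!: gr0I split: if_splits)
  moreover have "sum_mset M = n"
    using sum_mset_join_ones[of c A] A(4) p(2) assms(2) by (simp add: M_def)
  moreover have "count M 1 = c" "\<forall>x. 1 < x \<longrightarrow> count M x \<le> 1"
    using A(3) by (simp_all add: M_def join_ones_def count_mset_set')
  moreover have "3 \<le> size (filter_mset (\<lambda>x. 2 \<le> x) M)"
  proof -
    have "card {Max A - 2..Max A} = 3"
      using Max_ge_top3_consecutive_without_one[OF A3] by simp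
    moreover have "A \<in> top3_consecutive (n - c)"
      using A3 by (simp add: top3_consecutive_without_one_def)
    ultimately have "3 \<le> card A"
      using card_mono[OF A(1) top3_consecutive_top_interval] by metis
    then show ?thesis
      using filter_join_ones[OF A(1-3)] by (simp add: M_def)
  qed
  moreover have "parts_desc M ! 0 = parts_desc M ! 1 + 1" "parts_desc M ! 1 = parts_desc M ! 2 + 1"
    using parts_desc_join_ones[OF A3, of c] Max_ge_top3_consecutive_without_one[OF A3]
      nth_take[of 0 3 "parts_desc M"] nth_take[of 1 3 "parts_desc M"] nth_take[of 2 3 "parts_desc M"]
    by (simp_all add: M_def)
  ultimately show ?thesis
    using p(2) by (simp add: special_partitions_def is_partition_def M_def p(1))
qed

lemma card_special_partitions:
  assumes "2 \<le> n"
  shows "card (special_partitions n) = card (top3_consecutive_without_one n)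
    + card (top3_consecutive_without_one (n - 1)) + card (top3_consecutive_without_one (n - 2))"
proof -
  have "bij_betw split_ones (special_partitions n)
      (Sigma {..2} (\<lambda>c. top3_consecutive_without_one (n - c)))"
  proof (rule bij_betw_byWitness[where f' = join_ones])
    show "\<forall>M \<in> special_partitions n. join_ones (split_ones M) = M"
      by (simp add: special_partitions_def is_partition_def join_ones_split_ones)
    show "\<forall>p \<in> Sigma {..2} (\<lambda>c. top3_consecutive_without_one (n - c)).
        split_ones (join_ones p) = p"
      by (auto simp: top3_consecutive_without_one_def split_ones_join_ones
          top3_consecutive_def top2_consecutive_def distinct_partitions_def)
  qed (use split_ones_mem join_ones_mem[OF _ assms] in blast)+
  then have "card (special_partitions n)
      = card (Sigma {..2} (\<lambda>c. top3_consecutive_without_one (n - c)))"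
    by (rule bij_betw_same_card)
  also have "\<dots> = (\<Sum>c\<le>2. card (top3_consecutive_without_one (n - c)))"
    by (rule card_SigmaI) (simp_all add: top3_consecutive_without_one_def top3_consecutive_def
        top2_consecutive_def finite_distinct_partitions)
  finally show ?thesis
    by (simp add: numeral_2_eq_2)
qed

section \<open>The recurrence\<close>

lemma three_step_difference:
  fixes t q p :: "nat \<Rightarrow> int"
  assumes t: "\<And>k. 2 \<le> k \<Longrightarrow> t k = t (k - 2) + q k + of_bool (k = 3)"
    and q: "\<And>k. 1 \<le> k \<Longrightarrow> q k = p k + p (k - 1) + of_bool (k = 6)"
    and t01: "t 1 = t 0"
    and p: "\<And>k. k < 9 \<Longrightarrow> p k = 0"
    and "8 \<le> k"
  shows "t k - t (k - 3) = p k + p (k - 1) + p (k - 2)"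
  using \<open>8 \<le> k\<close>
proof (induction k rule: nat_induct_at_least)
  case base
  have "t 8 = t 6" "t 6 = t 4 + 1" "t 4 = t 2" "t 2 = t 0" "t 5 = t 3" "t 3 = t 1 + 1"
    using t[of 8] t[of 6] t[of 4] t[of 2] t[of 5] t[of 3]
      q[of 8] q[of 6] q[of 4] q[of 2] q[of 5] q[of 3] p[of 8] p[of 7] p[of 6] p[of 5]
      p[of 4] p[of 3] p[of 2] p[of 1]
    by simp_all
  with t01 p[of 8] p[of 7] p[of 6] show ?case
    by simp
next
  case (Suc k)
  \<comment> \<open>t (k + 1) - t (k - 2) = q (k + 1) + q k + q (k - 1) - (t k - t (k - 3)) for k \<ge> 8\<close>
  have "t (Suc k) = t (k - 1) + q (Suc k)" "t (k - 1) = t (k - 3) + q (k - 1)"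
    "t k = t (k - 2) + q k"
    using t[of "Suc k"] t[of "k - 1"] t[of k] Suc.hyps by (simp_all add: numeral_3_eq_3)
  moreover have "q (Suc k) = p (Suc k) + p k" "q k = p k + p (k - 1)"
    "q (k - 1) = p (k - 1) + p (k - 2)"
    using q[of "Suc k"] q[of k] q[of "k - 1"] Suc.hyps by (simp_all add: numeral_2_eq_2)
  ultimately show ?case
    using Suc.IH by (simp add: numeral_2_eq_2)
qed

theorem proposition2p1:
  fixes n :: nat
  assumes "9 \<le> n"
  shows "card (odd_ge5_partitions n) = card (special_partitions n)"
proof -
  define t where "t k = int (card (top2_consecutive k))" for k
  define q where "q k = int (card (top3_consecutive k))" for k
  define p where "p k = int (card (top3_consecutive_without_one k))" for k
  have odd_without_one: "int (card (partitions_with (\<lambda>x. odd x \<and> x \<noteq> 1) k)) = t k"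
    if "1 \<le> k" for k
    using card_partitions_with_remove_part[of odd 1 k] card_distinct_partitions_step[OF that]
      card_odd_partitions_eq_distinct[of k] card_odd_partitions_eq_distinct[of "k - 1"] that
    by (simp add: t_def)
  have "t n - t (n - 3) = p n + p (n - 1) + p (n - 2)"
  proof (rule three_step_difference)
    show "t k = t (k - 2) + q k + of_bool (k = 3)" if "2 \<le> k" for k
      using card_top2_consecutive_step[OF that] by (simp add: t_def q_def)
    show "q k = p k + p (k - 1) + of_bool (k = 6)" if "1 \<le> k" for k
      using card_top3_consecutive_step[OF that] by (simp add: q_def p_def)
    show "t 1 = t 0"
      using top2_consecutive_small by (simp add: t_def)
    show "p k = 0" if "k < 9" for k
      using top3_consecutive_without_one_small[OF that] by (simp add: p_def)
  qed (use assms in simp)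
  moreover have "int (card (odd_ge5_partitions n)) + t (n - 3) = t n"
    using card_partitions_with_remove_part[of "\<lambda>x. odd x \<and> x \<noteq> 1" 3 n] assms
      odd_without_one[of n] odd_without_one[of "n - 3"]
    by (simp add: odd_ge5_partitions_eq)
  moreover have "int (card (special_partitions n)) = p n + p (n - 1) + p (n - 2)"
    using card_special_partitions assms by (simp add: p_def)
  ultimately show ?thesis
    by simp
qed

end
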